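(* Let $1\le p\le q$, $n=p+q$, and let $\mu=(a_1,\dots,a_p\mid b_1,\dots,b_q)$ be a $\Delta^+(\mathfrak{k},\mathfrak{t})$-dominant weight with non-negative integer entries. Then the following are equivalent: (i) there exist $w\in W(\mathfrak{g},\mathfrak{t})^1$ and $1\le i\le n$ with $\langle\mu+2\rho_c,w\xi_i\rangle>2\langle\rho,\xi_i\rangle$ (i.e. $\mu$ is u-large); (ii) there exist $0\le f\le p$ and $0\le g\le q$ such that $$\sum_{i=1}^f a_i+\sum_{j=1}^g b_j>2pq-2(p-f)(q-g).$$
   Context: Weights are vectors in $\mathbb{R}^n$ written $(x_1,\dots,x_p\mid y_1,\dots,y_q)$ with the standard inner product. $\rho_c=(p,p-1,\dots,1\mid q,q-1,\dots,1)$, $\rho=(n,n-1,\dots,1)$, $\xi_i=e_1+\cdots+e_i$. A weight is $\Delta^+(\mathfrak{k},\mathfrak{t})$-dominant if $x_1\ge\cdots\ge x_p\ge0$ and $y_1\ge\cdots\ge y_q\ge0$. $W(\mathfrak{g},\mathfrak{t})$ is the group of signed permutations of the $n$ coordinates; $C_{\mathfrak{g}}=\{z\in\mathbb{R}^n: z_1\ge\cdots\ge z_n\ge0\}$, $C$ is the closed cone of $\Delta^+(\mathfrak{k},\mathfrak{t})$-dominant weights, and $W(\mathfrak{g},\mathfrak{t})^1=\{w\in W(\mathfrak{g},\mathfrak{t})\mid w(C_{\mathfrak{g}})\subset C\}$. A weight $\nu$ is u-small (lies in the unitarily small convex hull) iff $\langle\nu+2\rho_c,w\xi_i\rangle\le2\langle\rho,\xi_i\rangle$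 for all $1\le i\le n$ and all $w\in W(\mathfrak{g},\mathfrak{t})^1$; u-large means not u-small. *)

theory Defs
  imports Complex_Main "HOL-Combinatorics.Permutations"
begin

text \<open>Weights in R^n are modelled as functions nat => real; only the coordinates
  with index < n matter (index j corresponds to coordinate j+1 of the paper).
  Coordinates 0..p-1 are x_1..x_p, coordinates p..n-1 are y_1..y_q.\<close>

definition winner :: "nat \<Rightarrow> (nat \<Rightarrow> real) \<Rightarrow> (nat \<Rightarrow> real) \<Rightarrow> real" where
  "winner n u v = (\<Sum>j<n. u j * v j)"

definition sp_act :: "nat \<Rightarrow> (nat \<Rightarrow> nat) \<Rightarrow> (nat \<Rightarrow> real) \<Rightarrow> (nat \<Rightarrow> real) \<Rightarrow> (nat \<Rightarrow> real)" where
  "sp_act n \<sigma> s z = (\<lambda>j. if j < n then s j * z (\<sigma> j) else 0)"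

definition weyl_group :: "nat \<Rightarrow> ((nat \<Rightarrow> real) \<Rightarrow> (nat \<Rightarrow> real)) set" where
  "weyl_group n = {sp_act n \<sigma> s | \<sigma> s. \<sigma> permutes {..<n} \<and> (\<forall>j<n. s j = 1 \<or> s j = -1)}"

definition dom_cone_g :: "nat \<Rightarrow> (nat \<Rightarrow> real) set" where
  "dom_cone_g n = {z. (\<forall>k. Suc k < n \<longrightarrow> z (Suc k) \<le> z k) \<and> (0 < n \<longrightarrow> 0 \<le> z (n - 1))}"

definition dom_cone_k :: "nat \<Rightarrow> nat \<Rightarrow> (nat \<Rightarrow> real) set" where
  "dom_cone_k p q = {z.
     (\<forall>k. Suc k < p \<longrightarrow> z (Suc k) \<le> z k) \<and> (0 < p \<longrightarrow> 0 \<le> z (p - 1)) \<and>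
     (\<forall>k. p \<le> k \<and> Suc k < p + q \<longrightarrow> z (Suc k) \<le> z k) \<and> (0 < q \<longrightarrow> 0 \<le> z (p + q - 1))}"

definition weyl_group1 :: "nat \<Rightarrow> nat \<Rightarrow> ((nat \<Rightarrow> real) \<Rightarrow> (nat \<Rightarrow> real)) set" where
  "weyl_group1 p q = {w \<in> weyl_group (p + q). w ` dom_cone_g (p + q) \<subseteq> dom_cone_k p q}"

definition rho_c :: "nat \<Rightarrow> nat \<Rightarrow> nat \<Rightarrow> real" where
  "rho_c p q j = (if j < p then real (p - j) else if j < p + q then real (p + q - j) else 0)"

definition rho :: "nat \<Rightarrow> nat \<Rightarrow> real" where
  "rho n j = (if j < n then real (n - j) else 0)"

definition xi :: "nat \<Rightarrow> nat \<Rightarrow> real" where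
  "xi i j = (if j < i then 1 else 0)"

definition mkweight :: "nat \<Rightarrow> nat \<Rightarrow> (nat \<Rightarrow> real) \<Rightarrow> (nat \<Rightarrow> real) \<Rightarrow> nat \<Rightarrow> real" where
  "mkweight p q x y j = (if j < p then x j else if j < p + q then y (j - p) else 0)"

definition u_small :: "nat \<Rightarrow> nat \<Rightarrow> (nat \<Rightarrow> real) \<Rightarrow> bool" where
  "u_small p q \<nu> \<longleftrightarrow> (\<forall>i\<in>{1..p+q}. \<forall>w\<in>weyl_group1 p q.
      winner (p + q) (\<lambda>j. \<nu> j + 2 * rho_c p q j) (w (xi i)) \<le> 2 * winner (p + q) (rho (p + q)) (xi i))"

definition u_large :: "nat \<Rightarrow> nat \<Rightarrow> (nat \<Rightarrow> real) \<Rightarrow> bool" where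
  "u_large p q \<nu> \<longleftrightarrow> \<not> u_small p q \<nu>"

end

theory Submission
  imports Defs
begin

(* An element w of W(g,t)^1 cannot change signs, because it maps xi_n into the
   nonnegative cone C; so it permutes coordinates, and w xi_i is a 0/1 vector with
   i ones that is antitone on each of the two blocks, i.e. w xi_i = (xi_f | xi_g)
   = mkweight p q (xi f) (xi g) with f + g = i.  Conversely every (xi_f | xi_g)
   equals w xi_(f+g) for a shuffle permutation w in W(g,t)^1.  Finally
     <mu + 2 rho_c, (xi_f | xi_g)> = sum a + sum b + f(2p-f+1) + g(2q-g+1),
     2 <rho, xi_(f+g)> = (f+g)(2n-f-g+1),
   and the quadratic terms differ by exactly 2pq - 2(p-f)(q-g). *)

lemma dom_cone_g_antitone:
  assumes "z \<in> dom_cone_g n" "i \<le> j" "j < n"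
  shows "z j \<le> z i"
proof (rule lift_Suc_antimono_le_ivl[where N = "{k. Suc k < n}"])
  show "z (Suc k) \<le> z k" if "k \<in> {k. Suc k < n}" for k
    using assms(1) that unfolding dom_cone_g_def by blast
qed (use assms(2,3) in auto)

lemma dom_cone_g_nonneg:
  assumes "z \<in> dom_cone_g n" "j < n"
  shows "0 \<le> z j"
proof -
  have "z (n - 1) \<le> z j" using assms by (intro dom_cone_g_antitone) auto
  moreover have "0 \<le> z (n - 1)" using assms unfolding dom_cone_g_def by auto
  ultimately show ?thesis by simp
qed

lemma xi_in_dom_cone_g: "xi i \<in> dom_cone_g n"
  by (auto simp: dom_cone_g_def xi_def)

lemma dom_cone_k_antitone_fst:
  assumes "z \<in> dom_cone_k p q" "i \<le> j" "j < p"
  shows "z j \<le> z i"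
proof (rule lift_Suc_antimono_le_ivl[where N = "{k. Suc k < p}"])
  show "z (Suc k) \<le> z k" if "k \<in> {k. Suc k < p}" for k
    using assms(1) that unfolding dom_cone_k_def by blast
qed (use assms(2,3) in auto)

lemma dom_cone_k_antitone_snd:
  assumes "z \<in> dom_cone_k p q" "p \<le> i" "i \<le> j" "j < p + q"
  shows "z j \<le> z i"
proof (rule lift_Suc_antimono_le_ivl[where N = "{k. p \<le> k \<and> Suc k < p + q}"])
  show "z (Suc k) \<le> z k" if "k \<in> {k. p \<le> k \<and> Suc k < p + q}" for k
    using assms(1) that unfolding dom_cone_k_def by blast
qed (use assms(2-4) in auto)

lemma dom_cone_k_nonneg:
  assumes "z \<in> dom_cone_k p q" "j < p + q"
  shows "0 \<le> z j"
proof (cases "j < p")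
  case True
  then have "z (p - 1) \<le> z j" by (intro dom_cone_k_antitone_fst[OF assms(1)]) auto
  moreover have "0 < p" using True by simp
  then have "0 \<le> z (p - 1)" using assms(1) unfolding dom_cone_k_def by blast
  ultimately show ?thesis by simp
next
  case False
  then have "z (p + q - 1) \<le> z j" using assms(2) by (intro dom_cone_k_antitone_snd[OF assms(1)]) auto
  moreover have "0 < q" using False assms(2) by simp
  then have "0 \<le> z (p + q - 1)" using assms(1) unfolding dom_cone_k_def by blast
  ultimately show ?thesis by simp
qed

lemma antitone_zero_one_eq_xi:
  fixes v :: "nat \<Rightarrow> real"
  assumes antitone: "\<And>i j. i \<le> j \<Longrightarrow> j < m \<Longrightarrow> v j \<le> v i"
    and zero_one: "\<And>j. j < m \<Longrightarrow> v j = 0 \<or> v j = 1"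
  obtains k where "k \<le> m" "\<And>j. j < m \<Longrightarrow> v j = xi k j"
proof
  define k where "k = (LEAST k. k = m \<or> v k = 0)"
  show "k \<le> m"
    unfolding k_def by (rule Least_le) simp
  fix j assume "j < m"
  show "v j = xi k j"
  proof (cases "j < k")
    case True
    then show ?thesis
      using not_less_Least[of j "\<lambda>k. k = m \<or> v k = 0"] zero_one[OF \<open>j < m\<close>]
      by (auto simp: k_def xi_def)
  next
    case False
    have "k = m \<or> v k = 0"
      unfolding k_def by (rule LeastI[of _ m]) simp
    then have "v k = 0" using False \<open>j < m\<close> by auto
    then show ?thesis
      using antitone[of k j] zero_one[OF \<open>j < m\<close>] False \<open>j < m\<close> by (auto simp: xi_def)
  qed
qed

lemma sum_mkweight:
  "(\<Sum>j<p+q. mkweight p q x y j) = (\<Sum>j<p. x j) + (\<Sum>j<q. y j)"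
proof -
  have "(\<Sum>j<p+q. mkweight p q x y j) = (\<Sum>j<p. mkweight p q x y j) + (\<Sum>j=p..<p+q. mkweight p q x y j)"
    using sum.atLeastLessThan_concat[of 0 p "p+q" "mkweight p q x y"] by (simp add: atLeast0LessThan)
  also have "(\<Sum>j=p..<p+q. mkweight p q x y j) = (\<Sum>k<q. mkweight p q x y (k + p))"
    using sum.shift_bounds_nat_ivl[of "mkweight p q x y" 0 p q] by (simp add: atLeast0LessThan add.commute)
  finally show ?thesis by (simp add: mkweight_def)
qed

lemma winner_mkweight:
  "winner (p+q) (mkweight p q x y) (mkweight p q x' y') = winner p x x' + winner q y y'"
proof -
  have "mkweight p q x y j * mkweight p q x' y' j = mkweight p q (\<lambda>k. x k * x' k) (\<lambda>k. y k * y' k) j" for j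
    by (simp add: mkweight_def)
  then show ?thesis by (simp add: winner_def sum_mkweight)
qed

lemma winner_xi: "k \<le> m \<Longrightarrow> winner m x (xi k) = (\<Sum>j<k. x j)"
proof -
  assume "k \<le> m"
  then have "{..<m} \<inter> {..<k} = {..<k}" by auto
  then show ?thesis
    unfolding winner_def xi_def using sum.inter_restrict[of "{..<m}" x "{..<k}"]
    by (simp add: if_distrib cong: if_cong)
qed

lemma sum_xi: "k \<le> m \<Longrightarrow> (\<Sum>j<m. xi k j) = real k"
  using winner_xi[of k m "\<lambda>_. 1"] by (simp add: winner_def)

lemma two_winner_rho_xi:
  "k \<le> m \<Longrightarrow> 2 * winner m (rho m) (xi k) = real k * (2 * real m - real k + 1)"
proof (induction k)
  case (Suc k)
  then show ?case by (simp add: winner_xi rho_def algebra_simps)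
qed (simp add: winner_xi)

lemma weyl_group1_permutationE:
  assumes "w \<in> weyl_group1 p q"
  obtains \<sigma> where "\<sigma> permutes {..<p+q}" "w = sp_act (p+q) \<sigma> (\<lambda>_. 1)"
proof -
  obtain \<sigma> s where w: "w = sp_act (p+q) \<sigma> s" and perm: "\<sigma> permutes {..<p+q}"
    and sign: "\<forall>j<p+q. s j = 1 \<or> s j = -1"
    using assms unfolding weyl_group1_def weyl_group_def by blast
  have "s j = 1" if "j < p + q" for j
  proof -
    have "w (xi (p+q)) \<in> dom_cone_k p q"
      using assms xi_in_dom_cone_g unfolding weyl_group1_def by blast
    then have "0 \<le> w (xi (p+q)) j" using that by (rule dom_cone_k_nonneg)
    moreover have "\<sigma> j < p + q" using permutes_in_image[OF perm] that by simp
    ultimately show ?thesis using sign that by (auto simp: w sp_act_def xi_def)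
  qed
  then have "w = sp_act (p+q) \<sigma> (\<lambda>_. 1)" by (auto simp: w sp_act_def fun_eq_iff)
  with perm show thesis using that by blast
qed

lemma weyl_group1_xi_eq_mkweight_xi:
  assumes "w \<in> weyl_group1 p q" "i \<le> p + q"
  obtains f g where "f \<le> p" "g \<le> q" "f + g = i" "w (xi i) = mkweight p q (xi f) (xi g)"
proof -
  obtain \<sigma> where perm: "\<sigma> permutes {..<p+q}" and w: "w = sp_act (p+q) \<sigma> (\<lambda>_. 1)"
    using assms(1) by (rule weyl_group1_permutationE)
  define v where "v = w (xi i)"
  have v_cone: "v \<in> dom_cone_k p q"
    using assms(1) xi_in_dom_cone_g unfolding v_def weyl_group1_def by blast
  have v_eq: "v j = (if j < p + q then xi i (\<sigma> j) else 0)" for j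
    by (simp add: v_def w sp_act_def)
  have zero_one: "v j = 0 \<or> v j = 1" for j
    by (simp add: v_eq xi_def)
  have "v l \<le> v k" if "k \<le> l" "l < p" for k l
    using v_cone that by (rule dom_cone_k_antitone_fst)
  then obtain f where f: "f \<le> p" "\<And>j. j < p \<Longrightarrow> v j = xi f j"
    using antitone_zero_one_eq_xi[of p v] zero_one by blast
  have "v (p + l) \<le> v (p + k)" if "k \<le> l" "l < q" for k l
    using dom_cone_k_antitone_snd[OF v_cone] that by simp
  then obtain g where g: "g \<le> q" "\<And>j. j < q \<Longrightarrow> v (p + j) = xi g j"
    using antitone_zero_one_eq_xi[of q "\<lambda>j. v (p + j)"] zero_one by blast
  have v_mkweight: "v = mkweight p q (xi f) (xi g)"
  proof
    fix j
    show "v j = mkweight p q (xi f) (xi g) j"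
      using f(2)[of j] g(2)[of "j - p"] by (auto simp: mkweight_def v_eq)
  qed
  have "real (f + g) = (\<Sum>j<p+q. v j)"
    using f(1) g(1) by (simp add: v_mkweight sum_mkweight sum_xi)
  also have "\<dots> = (\<Sum>j<p+q. xi i (\<sigma> j))"
    by (simp add: v_eq)
  also have "\<dots> = (\<Sum>j<p+q. xi i j)"
    using sum.permute[OF perm, of "xi i"] by (simp add: comp_def)
  also have "\<dots> = real i"
    using assms(2) by (rule sum_xi)
  finally have "f + g = i" by linarith
  with f(1) g(1) v_mkweight show thesis using that unfolding v_def by blast
qed

lemma sp_act_in_weyl_group1:
  assumes perm: "\<sigma> permutes {..<p+q}"
    and mono_fst: "\<And>k. Suc k < p \<Longrightarrow> \<sigma> k \<le> \<sigma> (Suc k)"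
    and mono_snd: "\<And>k. p \<le> k \<Longrightarrow> Suc k < p + q \<Longrightarrow> \<sigma> k \<le> \<sigma> (Suc k)"
  shows "sp_act (p+q) \<sigma> (\<lambda>_. 1) \<in> weyl_group1 p q"
proof -
  have "sp_act (p+q) \<sigma> (\<lambda>_. 1) \<in> weyl_group (p+q)"
    using perm unfolding weyl_group_def by force
  moreover have "sp_act (p+q) \<sigma> (\<lambda>_. 1) z \<in> dom_cone_k p q" if z: "z \<in> dom_cone_g (p+q)" for z
  proof -
    have \<sigma>_less: "\<sigma> j < p + q" if "j < p + q" for j
      using permutes_in_image[OF perm] that by simp
    show ?thesis
      unfolding dom_cone_k_def sp_act_def
    proof (intro CollectI conjI allI impI)
      fix k assume "Suc k < p"
      then show "(if Suc k < p + q then 1 * z (\<sigma> (Suc k)) else 0) \<le> (if k < p + q then 1 * z (\<sigma> k) else 0)"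
        using dom_cone_g_antitone[OF z mono_fst \<sigma>_less] by simp
    next
      fix k assume "p \<le> k \<and> Suc k < p + q"
      then show "(if Suc k < p + q then 1 * z (\<sigma> (Suc k)) else 0) \<le> (if k < p + q then 1 * z (\<sigma> k) else 0)"
        using dom_cone_g_antitone[OF z mono_snd \<sigma>_less] by simp
    next
      assume "0 < p"
      then show "0 \<le> (if p - 1 < p + q then 1 * z (\<sigma> (p - 1)) else 0)"
        using dom_cone_g_nonneg[OF z \<sigma>_less] by simp
    next
      assume "0 < q"
      then show "0 \<le> (if p + q - 1 < p + q then 1 * z (\<sigma> (p + q - 1)) else 0)"
        using dom_cone_g_nonneg[OF z \<sigma>_less] by simp
    qed
  qed
  ultimately show ?thesis unfolding weyl_group1_def by blast
qed

lemma weyl_group1_realises_mkweight_xi: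
  assumes "f \<le> p" "g \<le> q"
  obtains w where "w \<in> weyl_group1 p q" "w (xi (f+g)) = mkweight p q (xi f) (xi g)"
proof -
  \<comment> \<open>the first \<open>g\<close> coordinates of the second block are moved right behind the first
      \<open>f\<close> coordinates of the first block, keeping the order inside each block\<close>
  define \<sigma> where "\<sigma> j = (if j < f then j else if j < p then j + g else if j < p + g then j - p + f else j)"
    for j :: nat
  have perm: "\<sigma> permutes {..<p+q}"
    by (rule inj_imp_permutes) (use assms in \<open>auto simp: \<sigma>_def inj_on_def split: if_splits\<close>)
  have "\<sigma> k \<le> \<sigma> (Suc k)" if "Suc k < p \<or> p \<le> k" for k
    using that assms(1) unfolding \<sigma>_def by auto
  then have "sp_act (p+q) \<sigma> (\<lambda>_. 1) \<in> weyl_group1 p q"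
    by (intro sp_act_in_weyl_group1[OF perm]) auto
  moreover have "sp_act (p+q) \<sigma> (\<lambda>_. 1) (xi (f+g)) = mkweight p q (xi f) (xi g)"
    using assms by (auto simp: fun_eq_iff sp_act_def \<sigma>_def xi_def mkweight_def)
  ultimately show thesis using that by blast
qed

lemma mkweight_add_two_rho_c:
  "(\<lambda>j. mkweight p q x y j + 2 * rho_c p q j)
     = mkweight p q (\<lambda>k. x k + 2 * rho p k) (\<lambda>k. y k + 2 * rho q k)"
  by (auto simp: fun_eq_iff mkweight_def rho_c_def rho_def)

lemma winner_shifted_mkweight_xi:
  assumes "f \<le> p" "g \<le> q"
  shows "winner (p+q) (\<lambda>j. mkweight p q x y j + 2 * rho_c p q j) (mkweight p q (xi f) (xi g))
    = (\<Sum>j<f. x j) + (\<Sum>j<g. y j)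
      + real f * (2 * real p - real f + 1) + real g * (2 * real q - real g + 1)"
proof -
  have "winner m (\<lambda>k. z k + 2 * rho m k) (xi k) = (\<Sum>j<k. z j) + real k * (2 * real m - real k + 1)"
    if "k \<le> m" for z m k
    using two_winner_rho_xi[OF that] that by (simp add: winner_xi sum.distrib sum_distrib_left)
  then show ?thesis
    using assms by (simp add: mkweight_add_two_rho_c winner_mkweight)
qed

lemma winner_shifted_mkweight_xi_gt_iff:
  fixes a b :: "nat \<Rightarrow> nat"
  assumes "f \<le> p" "g \<le> q"
  shows "winner (p+q) (\<lambda>j. mkweight p q (\<lambda>k. real (a k)) (\<lambda>k. real (b k)) j + 2 * rho_c p q j)
           (mkweight p q (xi f) (xi g)) > 2 * winner (p+q) (rho (p+q)) (xi (f+g))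
     \<longleftrightarrow> int (\<Sum>i<f. a i) + int (\<Sum>j<g. b j) > 2 * int p * int q - 2 * (int p - int f) * (int q - int g)"
proof -
  have "real (f + g) * (2 * real (p + q) - real (f + g) + 1)
      - real f * (2 * real p - real f + 1) - real g * (2 * real q - real g + 1)
      = 2 * real p * real q - 2 * (real p - real f) * (real q - real g)"
    by (simp add: algebra_simps)
  then show ?thesis
    using assms two_winner_rho_xi[of "f + g" "p + q"]
    by (simp add: winner_shifted_mkweight_xi flip: of_int_less_iff[where 'a = real])
      linarith
qed

theorem proposition2p2:
  fixes p q n :: nat and a b :: "nat \<Rightarrow> nat"
  assumes "1 \<le> p" and "p \<le> q" and "n = p + q"
    and dom_a: "\<forall>k. Suc k < p \<longrightarrow> a (Suc k) \<le> a k"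
    and dom_b: "\<forall>k. Suc k < q \<longrightarrow> b (Suc k) \<le> b k"
  shows "((\<exists>w\<in>weyl_group1 p q. \<exists>i\<in>{1..n}.
            winner n (\<lambda>j. mkweight p q (\<lambda>k. real (a k)) (\<lambda>k. real (b k)) j + 2 * rho_c p q j) (w (xi i))
              > 2 * winner n (rho n) (xi i))
          \<longleftrightarrow> u_large p q (mkweight p q (\<lambda>k. real (a k)) (\<lambda>k. real (b k))))
       \<and> ((\<exists>w\<in>weyl_group1 p q. \<exists>i\<in>{1..n}.
            winner n (\<lambda>j. mkweight p q (\<lambda>k. real (a k)) (\<lambda>k. real (b k)) j + 2 * rho_c p q j) (w (xi i))
              > 2 * winner n (rho n) (xi i))
          \<longleftrightarrow> (\<exists>f\<le>p. \<exists>g\<le>q.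
            int (\<Sum>i<f. a i) + int (\<Sum>j<g. b j) > 2 * int p * int q - 2 * (int p - int f) * (int q - int g)))"
    (is "(?large \<longleftrightarrow> _) \<and> (_ \<longleftrightarrow> ?split)")
proof
  show "?large \<longleftrightarrow> u_large p q (mkweight p q (\<lambda>k. real (a k)) (\<lambda>k. real (b k)))"
    using assms(3) by (auto simp: u_large_def u_small_def not_le)
next
  note gt_iff = winner_shifted_mkweight_xi_gt_iff[where a = a and b = b]
  show "?large \<longleftrightarrow> ?split"
  proof
    assume ?large
    then obtain w i where w: "w \<in> weyl_group1 p q" and i: "i \<in> {1..n}"
      and gt: "2 * winner n (rho n) (xi i)
        < winner n (\<lambda>j. mkweight p q (\<lambda>k. real (a k)) (\<lambda>k. real (b k)) j + 2 * rho_c p q j) (w (xi i))"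
      by blast
    have "i \<le> p + q" using i assms(3) by simp
    with w obtain f g where fg: "f \<le> p" "g \<le> q" and "f + g = i"
      and "w (xi i) = mkweight p q (xi f) (xi g)"
      by (rule weyl_group1_xi_eq_mkweight_xi)
    with gt gt_iff[OF fg] assms(3) show ?split by auto
  next
    assume ?split
    then obtain f g where fg: "f \<le> p" "g \<le> q"
      and ineq: "int (\<Sum>i<f. a i) + int (\<Sum>j<g. b j) > 2 * int p * int q - 2 * (int p - int f) * (int q - int g)"
      by blast
    from fg obtain w where w: "w \<in> weyl_group1 p q"
      and w_xi: "w (xi (f+g)) = mkweight p q (xi f) (xi g)"
      by (rule weyl_group1_realises_mkweight_xi)
    have "f + g \<in> {1..n}"
      using fg ineq assms(3) by (cases "f + g = 0") auto
    moreover have "2 * winner n (rho n) (xi (f+g))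
        < winner n (\<lambda>j. mkweight p q (\<lambda>k. real (a k)) (\<lambda>k. real (b k)) j + 2 * rho_c p q j) (w (xi (f+g)))"
      using gt_iff[OF fg] ineq w_xi assms(3) by simp
    ultimately show ?large using w by blast
  qed
qed

end
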